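(* Let $K$ be a field, let $A=\{{\bf a}_1,\ldots,{\bf a}_n\}\subset\mathbb{Z}^m$ with $\mathbb{N}A$ pointed, and let $I_A\subset K[x_1,\ldots,x_n]$ be its toric ideal. Then $I_A$ is radical splittable if and only if there exist a set $C\subset\ker_{\mathbb{Z}}(A)$ such that $\{B({\bf u})\mid{\bf u}\in C\}$ is a minimal system of binomial generators of $I_A$ up to radical, and sets $C_1,C_2$ with $C=C_1\cup C_2$, $\mathrm{span}_{\mathbb{Q}}(C_1)\subsetneqq\ker_{\mathbb{Q}}(A)$ and $\mathrm{span}_{\mathbb{Q}}(C_2)\subsetneqq\ker_{\mathbb{Q}}(A)$.
   Context: $\ker_{\mathbb{Q}}(A)=\{{\bf u}\in\mathbb{Q}^n\mid \sum u_i{\bf a}_i={\bf 0}\}$, $\ker_{\mathbb{Z}}(A)=\ker_{\mathbb{Q}}(A)\cap\mathbb{Z}^n$; $\mathbb{N}A$ pointed means $\ker_{\mathbb{Z}}(A)\cap\mathbb{N}^n=\{{\bf 0}\}$. The toric ideal $I_A$ is the kernel of $K[x_1,\ldots,x_n]\to K[t_1^{\pm1},\ldots,t_m^{\pm1}]$, $x_i\mapsto{\bf t}^{{\bf a}_i}$; for ${\bf u}\in\ker_{\mathbb{Z}}(A)$, $B({\bf u})={\bf x}^{{\bf u}^+}-{\bf x}^{{\bf u}^-}$ with ${\bf u}^\pm\in\mathbb{N}^n$ the positive/negative parts of ${\bf u}$. $I_A$ is radical splittable if there exist toric ideals $I_{A_1},I_{A_2}\subset K[x_1,\ldots,x_n]$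 (each $A_i$ a configuration of $n$ integer vectors with $\mathbb{N}A_i$ pointed) with $I_A=\mathrm{rad}(I_{A_1}+I_{A_2})$ and $I_{A_i}\ne I_A$ for $i=1,2$. A minimal system of binomial generators of $I_A$ up to radical is a set $S$ of binomials with $\mathrm{rad}(S)=I_A$ such that no proper subset of $S$ has radical equal to $I_A$. $\mathrm{span}_{\mathbb{Q}}(C)$ denotes the $\mathbb{Q}$-linear span. *)

theory Defs
  imports Complex_Main "HOL-Library.Poly_Mapping"
begin

(* Polynomial ring K[x_i | i :: 'n] as ('n \<Rightarrow>\<^sub>0 nat) \<Rightarrow>\<^sub>0 'k (monomial exponents to coefficients).
  Laurent polynomial ring in t_1, t_2, ... as the group ring (nat \<Rightarrow>\<^sub>0 int) \<Rightarrow>\<^sub>0 'k.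
  A configuration is a map A :: 'n \<Rightarrow> (nat \<Rightarrow>\<^sub>0 int); it lies in Z^m if all entries
  beyond index m vanish. *)

type_synonym ('n, 'k) mpoly = "('n \<Rightarrow>\<^sub>0 nat) \<Rightarrow>\<^sub>0 'k"

definition in_Zm :: "nat \<Rightarrow> ('n \<Rightarrow> (nat \<Rightarrow>\<^sub>0 int)) \<Rightarrow> bool" where
  "in_Zm m A \<longleftrightarrow> (\<forall>i. Poly_Mapping.keys (A i) \<subseteq> {..<m})"

definition kerZ :: "('n::finite \<Rightarrow> (nat \<Rightarrow>\<^sub>0 int)) \<Rightarrow> ('n \<Rightarrow> int) set" where
  "kerZ A = {u. \<forall>j. (\<Sum>i\<in>UNIV. u i * Poly_Mapping.lookup (A i) j) = 0}"

definition kerQ :: "('n::finite \<Rightarrow> (nat \<Rightarrow>\<^sub>0 int)) \<Rightarrow> ('n \<Rightarrow> rat) set" where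
  "kerQ A = {u. \<forall>j. (\<Sum>i\<in>UNIV. u i * of_int (Poly_Mapping.lookup (A i) j)) = 0}"

definition pointed :: "('n::finite \<Rightarrow> (nat \<Rightarrow>\<^sub>0 int)) \<Rightarrow> bool" where
  "pointed A \<longleftrightarrow> (\<forall>u\<in>kerZ A. (\<forall>i. u i \<ge> 0) \<longrightarrow> (\<forall>i. u i = 0))"

definition var :: "'n \<Rightarrow> ('n, 'k::comm_ring_1) mpoly" where
  "var i = Poly_Mapping.single (Poly_Mapping.single i 1) 1"

definition lmono :: "(nat \<Rightarrow>\<^sub>0 int) \<Rightarrow> (nat \<Rightarrow>\<^sub>0 int) \<Rightarrow>\<^sub>0 'k::comm_ring_1" where
  "lmono v = Poly_Mapping.single v 1"

(* The K-algebra homomorphism x_i to t^(a_i), applied to p. *)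
definition toric_hom :: "('n::finite \<Rightarrow> (nat \<Rightarrow>\<^sub>0 int)) \<Rightarrow> ('n, 'k::comm_ring_1) mpoly
    \<Rightarrow> (nat \<Rightarrow>\<^sub>0 int) \<Rightarrow>\<^sub>0 'k" where
  "toric_hom A p = (\<Sum>\<alpha>\<in>Poly_Mapping.keys p. Poly_Mapping.single 0 (Poly_Mapping.lookup p \<alpha>) *
       (\<Prod>i\<in>UNIV. (lmono (A i)) ^ (Poly_Mapping.lookup \<alpha> i)))"

definition toric_ideal :: "('n::finite \<Rightarrow> (nat \<Rightarrow>\<^sub>0 int)) \<Rightarrow> ('n, 'k::comm_ring_1) mpoly set" where
  "toric_ideal A = {p. toric_hom A p = 0}"

definition binomial :: "('n::finite \<Rightarrow> int) \<Rightarrow> ('n, 'k::comm_ring_1) mpoly" where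
  "binomial u = (\<Prod>i\<in>UNIV. var i ^ nat (u i)) - (\<Prod>i\<in>UNIV. var i ^ nat (- u i))"

definition ideal_gen :: "'a::comm_ring_1 set \<Rightarrow> 'a set" where
  "ideal_gen S = {p. \<exists>F c. finite F \<and> F \<subseteq> S \<and> p = (\<Sum>f\<in>F. c f * f)}"

definition radical :: "'a::comm_ring_1 set \<Rightarrow> 'a set" where
  "radical I = {p. \<exists>k. p ^ k \<in> I}"

definition ideal_sum :: "'a::comm_ring_1 set \<Rightarrow> 'a set \<Rightarrow> 'a set" where
  "ideal_sum I J = {p + q | p q. p \<in> I \<and> q \<in> J}"

definition radical_splittable :: "('n::finite, 'k::field) mpoly set \<Rightarrow> bool" where
  "radical_splittable I \<longleftrightarrow>
     (\<exists>m1 m2 (A1 :: 'n \<Rightarrow> (nat \<Rightarrow>\<^sub>0 int)) (A2 :: 'n \<Rightarrow> (nat \<Rightarrow>\<^sub>0 int)).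
        in_Zm m1 A1 \<and> pointed A1 \<and> in_Zm m2 A2 \<and> pointed A2 \<and>
        I = radical (ideal_sum (toric_ideal A1) (toric_ideal A2)) \<and>
        toric_ideal A1 \<noteq> I \<and> toric_ideal A2 \<noteq> I)"

definition min_gen_up_to_radical :: "'a::comm_ring_1 set \<Rightarrow> 'a set \<Rightarrow> bool" where
  "min_gen_up_to_radical S I \<longleftrightarrow>
     radical (ideal_gen S) = I \<and> (\<forall>S'. S' \<subset> S \<longrightarrow> radical (ideal_gen S') \<noteq> I)"

definition qspan :: "('n \<Rightarrow> int) set \<Rightarrow> ('n \<Rightarrow> rat) set" where
  "qspan C = {v. \<exists>F c. finite F \<and> F \<subseteq> C \<and> v = (\<lambda>i. \<Sum>u\<in>F. c u * of_int (u i))}"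

end

theory Submission
  imports Defs "HOL-Library.Function_Algebras"
begin

(* The toric ideal I_A is generated by the binomials B(u), u in ker_Z(A), so I_A is contained in
  I_A' exactly when ker_Z(A) is contained in ker_Z(A').
  If I_A = rad(I_A1 + I_A2) with I_Ai <> I_A, then each ker_Z(A_i) is a proper sublattice of
  ker_Z(A), and I_A is generated up to radical by the binomials of ker_Z(A1) Un ker_Z(A2). As I_A is
  finitely generated (Dickson's lemma), finitely many of them suffice, hence a minimal such set C
  exists; it splits along the two kernels into parts whose rational spans are proper subspaces of
  ker_Q(A).
  Conversely, if span_Q(C_i) is a proper subspace of ker_Q(A), some integral linear form f_i
  vanishes on C_i but not on ker_Z(A). Appending f_i to A as a new row gives a pointed configuration
  A_i with C_i in ker_Z(A_i), a proper sublattice of ker_Z(A), and then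
  I_A = rad(B(C)) <= rad(I_A1 + I_A2) <= I_A. *)

section \<open>Ideals generated by a set and their radicals\<close>

interpretation rmod: module "(*) :: 'a::comm_ring_1 \<Rightarrow> 'a \<Rightarrow> 'a"
  by unfold_locales (simp_all add: algebra_simps)

declare rmod.scale_scale [simp del] \<comment> \<open>it would loop with \<open>mult.assoc\<close>\<close>

lemma ideal_gen_eq_span: "ideal_gen S = rmod.span S"
  unfolding ideal_gen_def rmod.span_explicit by auto

lemma ideal_gen_base: "p \<in> S \<Longrightarrow> p \<in> ideal_gen S"
  unfolding ideal_gen_eq_span by (rule rmod.span_base)

lemma ideal_gen_0: "0 \<in> ideal_gen S"
  unfolding ideal_gen_eq_span by (rule rmod.span_zero)

lemma ideal_gen_add: "p \<in> ideal_gen S \<Longrightarrow> q \<in> ideal_gen S \<Longrightarrow> p + q \<in> ideal_gen S"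
  unfolding ideal_gen_eq_span by (rule rmod.span_add)

lemma ideal_gen_mult: "p \<in> ideal_gen S \<Longrightarrow> c * p \<in> ideal_gen S"
  unfolding ideal_gen_eq_span by (rule rmod.span_scale)

lemma ideal_gen_mono: "S \<subseteq> T \<Longrightarrow> ideal_gen S \<subseteq> ideal_gen T"
  unfolding ideal_gen_eq_span by (rule rmod.span_mono)

lemma ideal_gen_minimal: "S \<subseteq> I \<Longrightarrow> rmod.subspace I \<Longrightarrow> ideal_gen S \<subseteq> I"
  unfolding ideal_gen_eq_span by (rule rmod.span_minimal)

lemma ideal_gen_Un: "ideal_gen (S \<union> T) = ideal_sum (ideal_gen S) (ideal_gen T)"
  unfolding ideal_gen_eq_span ideal_sum_def rmod.span_Un ..

lemma ideal_gen_finite_subset: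
  assumes "p \<in> ideal_gen S"
  obtains S0 where "S0 \<subseteq> S" "finite S0" "p \<in> ideal_gen S0"
  using assms unfolding ideal_gen_def by blast

lemma radical_subset: "I \<subseteq> radical I"
  unfolding radical_def by (auto intro: exI[of _ 1])

lemma radical_mono: "I \<subseteq> J \<Longrightarrow> radical I \<subseteq> radical J"
  unfolding radical_def by auto

lemma radical_radical: "radical (radical I) = radical I"
proof
  show "radical (radical I) \<subseteq> radical I"
    unfolding radical_def by (auto simp flip: power_mult)
qed (rule radical_subset)

lemma subspace_radical_ideal_gen: "rmod.subspace (radical (ideal_gen S))"
  unfolding rmod.subspace_def
proof (intro conjI ballI allI)
  show "0 \<in> radical (ideal_gen S)"
    using ideal_gen_0 radical_subset by blast
next
  fix c p assume "p \<in> radical (ideal_gen S)"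
  then obtain k where "p ^ k \<in> ideal_gen S" unfolding radical_def by blast
  then have "(c * p) ^ k \<in> ideal_gen S"
    by (simp add: power_mult_distrib ideal_gen_mult)
  then show "c * p \<in> radical (ideal_gen S)" unfolding radical_def by blast
next
  fix p q assume "p \<in> radical (ideal_gen S)" "q \<in> radical (ideal_gen S)"
  then obtain k l where k: "p ^ k \<in> ideal_gen S" and l: "q ^ l \<in> ideal_gen S"
    unfolding radical_def by blast
  \<comment> \<open>every term of the binomial expansion of \<open>(p + q) ^ (k + l)\<close> contains \<open>p ^ k\<close> or \<open>q ^ l\<close>\<close>
  have "of_nat ((k + l) choose i) * p ^ i * q ^ (k + l - i) \<in> ideal_gen S" for i
  proof (cases "k \<le> i")
    case True
    then have "p ^ i = p ^ (i - k) * p ^ k" by (simp flip: power_add)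
    then show ?thesis using k ideal_gen_mult by (metis mult.assoc mult.commute)
  next
    case False
    then have "q ^ (k + l - i) = q ^ (k - i) * q ^ l" by (simp flip: power_add)
    then show ?thesis using l ideal_gen_mult by (metis mult.assoc)
  qed
  then have "(p + q) ^ (k + l) \<in> ideal_gen S"
    unfolding binomial_ring ideal_gen_eq_span by (intro rmod.span_sum) (simp add: ideal_gen_eq_span)
  then show "p + q \<in> radical (ideal_gen S)" unfolding radical_def by blast
qed

lemma radical_ideal_gen_subset:
  assumes "S \<subseteq> radical (ideal_gen T)"
  shows "radical (ideal_gen S) \<subseteq> radical (ideal_gen T)"
proof -
  have "ideal_gen S \<subseteq> radical (ideal_gen T)"
    using assms subspace_radical_ideal_gen by (rule ideal_gen_minimal)
  then show ?thesis using radical_mono radical_radical by metis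
qed

lemma finite_subset_radical_ideal_gen:
  assumes "finite F" "F \<subseteq> radical (ideal_gen S)"
  obtains S0 where "S0 \<subseteq> S" "finite S0" "F \<subseteq> radical (ideal_gen S0)"
  using assms
proof (induction F arbitrary: thesis rule: finite_induct)
  case empty
  then show ?case by blast
next
  case (insert p F)
  then obtain S0 where S0: "S0 \<subseteq> S" "finite S0" "F \<subseteq> radical (ideal_gen S0)" by blast
  obtain k where "p ^ k \<in> ideal_gen S"
    using insert.prems(2) unfolding radical_def by blast
  then obtain S1 where S1: "S1 \<subseteq> S" "finite S1" "p ^ k \<in> ideal_gen S1"
    by (rule ideal_gen_finite_subset)
  have "radical (ideal_gen S0) \<union> radical (ideal_gen S1) \<subseteq> radical (ideal_gen (S0 \<union> S1))"
    by (intro Un_least radical_mono ideal_gen_mono) auto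
  moreover have "p \<in> radical (ideal_gen S1)" using S1(3) unfolding radical_def by blast
  ultimately show ?case using insert.prems(1)[of "S0 \<union> S1"] S0 S1 by blast
qed

lemma min_gen_up_to_radical_subset_finite:
  assumes "finite S" "radical (ideal_gen S) = I"
  obtains T where "T \<subseteq> S" "min_gen_up_to_radical T I"
proof -
  let ?gen = "\<lambda>T. T \<subseteq> S \<and> radical (ideal_gen T) = I"
  obtain T where T: "?gen T" and least: "\<And>T'. ?gen T' \<Longrightarrow> card T \<le> card T'"
    using ex_has_least_nat[of ?gen S card] assms(2) by blast
  have "radical (ideal_gen T') \<noteq> I" if "T' \<subset> T" for T'
  proof
    assume "radical (ideal_gen T') = I"
    then have "card T \<le> card T'" using T that by (intro least) auto
    moreover have "card T' < card T"
      using that T assms(1) by (meson psubset_card_mono finite_subset)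
    ultimately show False by simp
  qed
  then show thesis using that T unfolding min_gen_up_to_radical_def by blast
qed

lemma min_gen_up_to_radical_subset:
  assumes "radical (ideal_gen S) = I" "finite F" "F \<subseteq> I" "I \<subseteq> radical (ideal_gen F)"
  obtains T where "T \<subseteq> S" "min_gen_up_to_radical T I"
proof -
  obtain S0 where S0: "S0 \<subseteq> S" "finite S0" "F \<subseteq> radical (ideal_gen S0)"
    using assms(1-3) finite_subset_radical_ideal_gen by metis
  have "I \<subseteq> radical (ideal_gen S0)"
    using assms(4) radical_ideal_gen_subset[OF S0(3)] by blast
  moreover have "radical (ideal_gen S0) \<subseteq> I"
    using assms(1) S0(1) by (metis radical_mono ideal_gen_mono)
  ultimately obtain T where "T \<subseteq> S0" "min_gen_up_to_radical T I"
    using min_gen_up_to_radical_subset_finite[OF S0(2)] by blast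
  then show thesis using that S0(1) by blast
qed

section \<open>Monomials and the toric homomorphism\<close>

definition monomial :: "('n::finite \<Rightarrow> nat) \<Rightarrow> ('n, 'k::comm_ring_1) mpoly" where
  "monomial e = (\<Prod>i\<in>UNIV. var i ^ e i)"

text \<open>The \<open>A\<close>-degree \<open>\<Sum>\<^sub>i e\<^sub>i a\<^sub>i\<close> of the exponent \<open>e\<close>; the group \<open>nat \<Rightarrow>\<^sub>0 int\<close> carries no
  scalar multiplication, hence the repeated sum.\<close>
definition A_degree :: "('n::finite \<Rightarrow> (nat \<Rightarrow>\<^sub>0 int)) \<Rightarrow> ('n \<Rightarrow> nat) \<Rightarrow> nat \<Rightarrow>\<^sub>0 int" where
  "A_degree A e = (\<Sum>i\<in>UNIV. \<Sum>j<e i. A i)"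

lemma single_one_power:
  "(Poly_Mapping.single v (1::'b::comm_semiring_1) :: 'a::comm_monoid_add \<Rightarrow>\<^sub>0 'b) ^ k
     = Poly_Mapping.single (\<Sum>j<k. v) 1"
  by (induction k) (simp_all add: mult_single add.commute)

lemma prod_single_one:
  "(\<Prod>i\<in>F. Poly_Mapping.single (f i) (1::'b::comm_semiring_1) :: 'a::comm_monoid_add \<Rightarrow>\<^sub>0 'b)
     = Poly_Mapping.single (\<Sum>i\<in>F. f i) 1"
  by (induction F rule: infinite_finite_induct) (simp_all add: mult_single)

lemma sum_single_lookup:
  "(\<Sum>i\<in>(UNIV::'n::finite set). Poly_Mapping.single i (Poly_Mapping.lookup \<alpha> i)) = \<alpha>"
  by (rule poly_mapping_eqI) (simp add: lookup_sum lookup_single when_def)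

lemma lookup_sum_single:
  "Poly_Mapping.lookup (\<Sum>i\<in>(UNIV::'n::finite set). Poly_Mapping.single i (e i)) = e"
  by (simp add: fun_eq_iff lookup_sum lookup_single when_def)

lemma poly_mapping_eq_sum_single:
  "p = (\<Sum>\<alpha>\<in>Poly_Mapping.keys p. Poly_Mapping.single \<alpha> (Poly_Mapping.lookup p \<alpha>))"
  by (rule poly_mapping_eqI) (simp add: lookup_sum lookup_single when_def in_keys_iff)

lemma var_power:
  "(var i :: ('n, 'k::comm_ring_1) mpoly) ^ k = Poly_Mapping.single (Poly_Mapping.single i k) 1"
proof -
  have "(\<Sum>j<k. Poly_Mapping.single i (1::nat)) = Poly_Mapping.single i k"
    by (induction k) (simp_all del: sum_constant add: single_add[symmetric])
  then show ?thesis unfolding var_def single_one_power by simp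
qed

lemma monomial_eq_single:
  "(monomial e :: ('n::finite, 'k::comm_ring_1) mpoly)
     = Poly_Mapping.single (\<Sum>i\<in>UNIV. Poly_Mapping.single i (e i)) 1"
  unfolding monomial_def var_power by (rule prod_single_one)

lemma monomial_lookup:
  "(monomial (Poly_Mapping.lookup \<alpha>) :: ('n::finite, 'k::comm_ring_1) mpoly) = Poly_Mapping.single \<alpha> 1"
  by (simp add: monomial_eq_single sum_single_lookup)

lemma monomial_add:
  "(monomial (e + f) :: ('n::finite, 'k::comm_ring_1) mpoly) = monomial e * monomial f"
  unfolding monomial_def by (simp add: power_add prod.distrib)

lemma binomial_eq_monomial_diff:
  "binomial u = monomial (\<lambda>i. nat (u i)) - monomial (\<lambda>i. nat (- u i))"
  unfolding binomial_def monomial_def ..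

lemma monomial_diff_eq_binomial_mult:
  "(monomial \<alpha> - monomial \<beta> :: ('n::finite, 'k::comm_ring_1) mpoly)
     = binomial (\<lambda>i. int (\<alpha> i) - int (\<beta> i)) * monomial (\<lambda>i. min (\<alpha> i) (\<beta> i))"
proof -
  define u where "u = (\<lambda>i. int (\<alpha> i) - int (\<beta> i))"
  define \<gamma> where "\<gamma> = (\<lambda>i. min (\<alpha> i) (\<beta> i))"
  have "\<alpha> = (\<lambda>i. nat (u i)) + \<gamma>" "\<beta> = (\<lambda>i. nat (- u i)) + \<gamma>"
    unfolding u_def \<gamma>_def by (auto simp: fun_eq_iff)
  then have "(monomial \<alpha> - monomial \<beta> :: ('n, 'k) mpoly) = binomial u * monomial \<gamma>"
    by (simp only: monomial_add binomial_eq_monomial_diff left_diff_distrib)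
  then show ?thesis unfolding u_def \<gamma>_def .
qed

lemma lookup_A_degree:
  "Poly_Mapping.lookup (A_degree A e) j = (\<Sum>i\<in>UNIV. int (e i) * Poly_Mapping.lookup (A i) j)"
  unfolding A_degree_def lookup_sum by simp

lemma A_degree_eq_iff:
  "A_degree A e = A_degree A f \<longleftrightarrow> (\<lambda>i. int (e i) - int (f i)) \<in> kerZ A"
proof -
  have "A_degree A e = A_degree A f \<longleftrightarrow>
      (\<forall>j. Poly_Mapping.lookup (A_degree A e) j = Poly_Mapping.lookup (A_degree A f) j)"
    by (metis poly_mapping_eqI)
  then show ?thesis
    unfolding kerZ_def by (simp add: lookup_A_degree left_diff_distrib sum_subtractf)
qed

lemma A_degree_0 [simp]: "A_degree A 0 = 0"
  unfolding A_degree_def by simp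

lemma A_degree_add: "A_degree A (e + f) = A_degree A e + A_degree A f"
  unfolding A_degree_def by (simp add: sum.distrib distrib_right)

lemma A_degree_eq_0_imp_0:
  assumes "pointed A" "A_degree A e = 0"
  shows "e = 0"
proof -
  have "(\<lambda>i. int (e i) - int (0 i)) \<in> kerZ A"
    using assms(2) A_degree_eq_iff[of A e 0] by simp
  then show ?thesis using assms(1) unfolding pointed_def by (auto simp: fun_eq_iff)
qed

lemma toric_hom_eq_sum:
  "toric_hom A p = (\<Sum>\<alpha>\<in>Poly_Mapping.keys p.
     Poly_Mapping.single (A_degree A (Poly_Mapping.lookup \<alpha>)) (Poly_Mapping.lookup p \<alpha>))"
  unfolding toric_hom_def lmono_def single_one_power prod_single_one A_degree_def
  by (simp add: mult_single)

lemma lookup_toric_hom: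
  "Poly_Mapping.lookup (toric_hom A p) d
     = (\<Sum>\<alpha>\<in>Poly_Mapping.keys p. Poly_Mapping.lookup p \<alpha> when A_degree A (Poly_Mapping.lookup \<alpha>) = d)"
  unfolding toric_hom_eq_sum by (simp add: lookup_sum lookup_single)

lemma toric_hom_single:
  "toric_hom A (Poly_Mapping.single \<alpha> c) = Poly_Mapping.single (A_degree A (Poly_Mapping.lookup \<alpha>)) c"
  by (cases "c = 0") (simp_all add: toric_hom_eq_sum)

lemma toric_hom_0 [simp]: "toric_hom A 0 = 0"
  unfolding toric_hom_def by simp

lemma toric_hom_add: "toric_hom A (p + q) = toric_hom A p + toric_hom A q"
  unfolding toric_hom_eq_sum by (rule setsum_keys_plus_distrib) (simp_all add: single_add)

lemma toric_hom_diff: "toric_hom A (p - q) = toric_hom A p - toric_hom A q"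
proof -
  have "toric_hom A (p - q) + toric_hom A q = toric_hom A p"
    by (simp flip: toric_hom_add)
  then show ?thesis by (simp add: eq_diff_eq)
qed

lemma toric_hom_sum: "toric_hom A (\<Sum>x\<in>F. f x) = (\<Sum>x\<in>F. toric_hom A (f x))"
  by (induction F rule: infinite_finite_induct) (simp_all add: toric_hom_add)

lemma toric_hom_mult: "toric_hom A (p * q) = toric_hom A p * toric_hom A q"
proof -
  let ?m = "\<lambda>p \<alpha>. Poly_Mapping.single \<alpha> (Poly_Mapping.lookup p \<alpha>)"
  let ?t = "\<lambda>p \<alpha>. Poly_Mapping.single (A_degree A (Poly_Mapping.lookup \<alpha>)) (Poly_Mapping.lookup p \<alpha>)"
  have lookup_plus:
    "Poly_Mapping.lookup (\<alpha> + \<beta>) = Poly_Mapping.lookup \<alpha> + Poly_Mapping.lookup \<beta>" for \<alpha> \<beta>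
    by (simp add: fun_eq_iff lookup_add)
  have "p * q = (\<Sum>\<alpha>\<in>Poly_Mapping.keys p. \<Sum>\<beta>\<in>Poly_Mapping.keys q. ?m p \<alpha> * ?m q \<beta>)"
    by (subst (1) poly_mapping_eq_sum_single, subst (2) poly_mapping_eq_sum_single)
      (simp only: sum_product)
  then have "toric_hom A (p * q) = (\<Sum>\<alpha>\<in>Poly_Mapping.keys p. \<Sum>\<beta>\<in>Poly_Mapping.keys q. ?t p \<alpha> * ?t q \<beta>)"
    by (simp add: toric_hom_sum mult_single toric_hom_single lookup_plus A_degree_add)
  then show ?thesis
    unfolding toric_hom_eq_sum[of A p] toric_hom_eq_sum[of A q] by (simp only: sum_product)
qed

lemma toric_hom_1: "toric_hom A 1 = 1"
  by (simp add: toric_hom_def lookup_one)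

lemma toric_hom_power: "toric_hom A (p ^ k) = toric_hom A p ^ k"
  by (induction k) (simp_all add: toric_hom_1 toric_hom_mult)

lemma toric_hom_monomial:
  "toric_hom A (monomial e :: ('n::finite, 'k::comm_ring_1) mpoly) = Poly_Mapping.single (A_degree A e) 1"
  by (simp add: monomial_eq_single toric_hom_single lookup_sum_single)

section \<open>Toric ideals are generated by binomials\<close>

lemma single_one_eq_iff:
  "Poly_Mapping.single a (1::'b::zero_neq_one) = Poly_Mapping.single b 1 \<longleftrightarrow> a = b"
  by (metis lookup_single_eq lookup_single_not_eq zero_neq_one)

lemma binomial_in_toric_ideal_iff:
  "(binomial u :: ('n::finite, 'k::comm_ring_1) mpoly) \<in> toric_ideal A \<longleftrightarrow> u \<in> kerZ A"
proof -
  have "(\<lambda>i. int (nat (u i)) - int (nat (- u i))) = u" by auto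
  then show ?thesis
    unfolding toric_ideal_def binomial_eq_monomial_diff
    by (simp add: toric_hom_diff toric_hom_monomial single_one_eq_iff A_degree_eq_iff)
qed

lemma subspace_toric_ideal: "rmod.subspace (toric_ideal A)"
  unfolding rmod.subspace_def toric_ideal_def by (simp add: toric_hom_add toric_hom_mult)

lemma radical_toric_ideal: "radical (toric_ideal A :: ('n::finite, 'k::idom) mpoly set) = toric_ideal A"
  unfolding radical_def toric_ideal_def by (auto simp: toric_hom_power)

lemma monomial_diff_in_ideal_gen:
  assumes "A_degree A \<alpha> = A_degree A \<beta>"
  shows "(monomial \<alpha> - monomial \<beta> :: ('n::finite, 'k::comm_ring_1) mpoly) \<in> ideal_gen (binomial ` kerZ A)"
proof -
  have "binomial (\<lambda>i. int (\<alpha> i) - int (\<beta> i)) \<in> (binomial ` kerZ A :: ('n, 'k) mpoly set)"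
    using assms by (simp add: A_degree_eq_iff)
  then show ?thesis
    unfolding monomial_diff_eq_binomial_mult by (subst mult.commute) (intro ideal_gen_mult ideal_gen_base)
qed

text \<open>A nonzero \<open>p \<in> I\<^sub>A\<close> has two distinct exponents \<open>\<alpha>, \<beta>\<close> of the same \<open>A\<close>-degree, and
  moving the coefficient of \<open>x\<^sup>\<alpha>\<close> onto \<open>x\<^sup>\<beta>\<close> changes \<open>p\<close> by a multiple of \<open>x\<^sup>\<alpha> - x\<^sup>\<beta>\<close>
  while removing \<open>\<alpha>\<close> from its support.\<close>
lemma toric_ideal_subset_ideal_gen:
  "toric_ideal A \<subseteq> (ideal_gen (binomial ` kerZ A) :: ('n::finite, 'k::comm_ring_1) mpoly set)"
proof
  fix p :: "('n, 'k) mpoly"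
  assume "p \<in> toric_ideal A"
  then show "p \<in> ideal_gen (binomial ` kerZ A)"
  proof (induction "card (Poly_Mapping.keys p)" arbitrary: p rule: less_induct)
    case less
    let ?deg = "\<lambda>\<gamma>. A_degree A (Poly_Mapping.lookup \<gamma>)"
    show ?case
    proof (cases "p = 0")
      case True
      then show ?thesis by (simp add: ideal_gen_0)
    next
      case False
      then have "Poly_Mapping.keys p \<noteq> {}" by simp
      then obtain \<alpha> where \<alpha>: "\<alpha> \<in> Poly_Mapping.keys p" by blast
      have "\<exists>\<beta>\<in>Poly_Mapping.keys p - {\<alpha>}. ?deg \<beta> = ?deg \<alpha>"
      proof (rule ccontr)
        assume "\<not> ?thesis"
        then have "Poly_Mapping.lookup (toric_hom A p) (?deg \<alpha>) = Poly_Mapping.lookup p \<alpha>"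
          unfolding lookup_toric_hom
          by (subst sum.remove[OF finite_keys \<alpha>]) (auto intro!: sum.neutral simp: when_def)
        then show False using less.prems \<alpha> by (simp add: toric_ideal_def in_keys_iff)
      qed
      then obtain \<beta> where \<beta>: "\<beta> \<in> Poly_Mapping.keys p" "\<beta> \<noteq> \<alpha>" "?deg \<beta> = ?deg \<alpha>"
        by blast
      define c where "c = Poly_Mapping.lookup p \<alpha>"
      define q where "q = p - Poly_Mapping.single \<alpha> c + Poly_Mapping.single \<beta> c"
      have p_eq: "p = q + Poly_Mapping.single 0 c *
          (monomial (Poly_Mapping.lookup \<alpha>) - monomial (Poly_Mapping.lookup \<beta>))"
        by (simp add: q_def monomial_lookup mult_single algebra_simps)
      have "Poly_Mapping.keys q \<subseteq> Poly_Mapping.keys p - {\<alpha>}"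
        using \<alpha> \<beta>(1,2)
        by (auto simp: q_def c_def in_keys_iff lookup_add lookup_minus lookup_single when_def split: if_splits)
      then have "card (Poly_Mapping.keys q) < card (Poly_Mapping.keys p)"
        using \<alpha> by (intro psubset_card_mono) auto
      moreover have "q \<in> toric_ideal A"
        using less.prems \<beta>(3)
        by (simp add: q_def toric_ideal_def toric_hom_add toric_hom_diff toric_hom_single)
      ultimately have "q \<in> ideal_gen (binomial ` kerZ A)" by (rule less.hyps)
      then show ?thesis
        by (subst p_eq) (intro ideal_gen_add ideal_gen_mult monomial_diff_in_ideal_gen \<beta>(3)[symmetric])
    qed
  qed
qed

lemma toric_ideal_eq_ideal_gen:
  "toric_ideal A = (ideal_gen (binomial ` kerZ A) :: ('n::finite, 'k::comm_ring_1) mpoly set)"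
proof
  show "ideal_gen (binomial ` kerZ A) \<subseteq> toric_ideal A"
    using subspace_toric_ideal by (rule ideal_gen_minimal[rotated]) (auto simp: binomial_in_toric_ideal_iff)
qed (rule toric_ideal_subset_ideal_gen)

lemma toric_ideal_subset_iff:
  "(toric_ideal A :: ('n::finite, 'k::comm_ring_1) mpoly set) \<subseteq> toric_ideal B \<longleftrightarrow> kerZ A \<subseteq> kerZ B"
proof
  assume "toric_ideal A \<subseteq> (toric_ideal B :: ('n, 'k) mpoly set)"
  then show "kerZ A \<subseteq> kerZ B"
    using binomial_in_toric_ideal_iff[where 'k='k] by blast
next
  assume "kerZ A \<subseteq> kerZ B"
  then show "toric_ideal A \<subseteq> (toric_ideal B :: ('n, 'k) mpoly set)"
    unfolding toric_ideal_eq_ideal_gen[of A] toric_ideal_eq_ideal_gen[of B]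
    by (intro ideal_gen_mono image_mono)
qed

section \<open>Dickson's lemma and finite generation\<close>

lemma dickson_lemma:
  fixes c :: "'x \<Rightarrow> 'i \<Rightarrow> nat"
  assumes "finite I"
  shows "\<exists>M\<subseteq>X. finite M \<and> (\<forall>x\<in>X. \<exists>m\<in>M. \<forall>i\<in>I. c m i \<le> c x i)"
  using assms
proof (induction I arbitrary: X rule: finite_induct)
  case empty
  show ?case
    by (rule exI[of _ "if X = {} then {} else {SOME x. x \<in> X}"]) (auto intro: someI)
next
  case (insert j I)
  obtain f where f: "\<And>X. f X \<subseteq> X \<and> finite (f X) \<and> (\<forall>x\<in>X. \<exists>m\<in>f X. \<forall>i\<in>I. c m i \<le> c x i)"
    using insert.IH by metis
  \<comment> \<open>below a cover element \<open>m\<close> that fails in coordinate \<open>j\<close>, the slice \<open>c x j = k < c m j\<close> is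
    covered by its own finite set\<close>
  define slice where "slice k = {x\<in>X. c x j = k}" for k
  define M where "M = f X \<union> (\<Union>m\<in>f X. \<Union>k<c m j. f (slice k))"
  have "M \<subseteq> X" unfolding M_def using f[of X] f[of "slice _"] by (auto simp: slice_def)
  moreover have "finite M" unfolding M_def using f by auto
  moreover have "\<exists>m\<in>M. \<forall>i\<in>insert j I. c m i \<le> c x i" if x: "x \<in> X" for x
  proof -
    obtain m where m: "m \<in> f X" "\<forall>i\<in>I. c m i \<le> c x i" using f[of X] x by blast
    show ?thesis
    proof (cases "c m j \<le> c x j")
      case True
      then show ?thesis using m unfolding M_def by auto
    next
      case False
      have "x \<in> slice (c x j)" using x unfolding slice_def by auto
      then obtain m' where m': "m' \<in> f (slice (c x j))" "\<forall>i\<in>I. c m' i \<le> c x i"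
        using f[of "slice (c x j)"] by blast
      have "c m' j = c x j" using m'(1) f[of "slice (c x j)"] unfolding slice_def by auto
      moreover have "m' \<in> M" unfolding M_def using m(1) m'(1) False by auto
      ultimately show ?thesis using m'(2) by (intro bexI[of _ m']) auto
    qed
  qed
  ultimately show ?case by blast
qed

lemma monomial_add_diff_eq:
  "(monomial (\<alpha> + \<alpha>') - monomial (\<beta> + \<beta>') :: ('n::finite, 'k::comm_ring_1) mpoly)
     = monomial \<alpha> * (monomial \<alpha>' - monomial \<beta>') + monomial \<beta>' * (monomial \<alpha> - monomial \<beta>)"
  by (simp add: monomial_add algebra_simps)

text \<open>Induction on the total degree: by pointedness the pair \<open>(\<alpha>', \<beta>')\<close> below \<open>(\<alpha>, \<beta>)\<close>
  has \<open>\<beta>' \<noteq> 0\<close>, so splitting it off strictly lowers the degree.\<close>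
lemma monomial_diff_in_ideal_gen_of_cover:
  fixes A :: "'n::finite \<Rightarrow> (nat \<Rightarrow>\<^sub>0 int)"
  assumes "pointed A"
    and M: "\<And>\<alpha>' \<beta>'. (\<alpha>', \<beta>') \<in> M \<Longrightarrow> A_degree A \<alpha>' = A_degree A \<beta>' \<and> \<alpha>' \<noteq> \<beta>'"
    and cover: "\<And>\<alpha> \<beta>. A_degree A \<alpha> = A_degree A \<beta> \<Longrightarrow> \<alpha> \<noteq> \<beta> \<Longrightarrow>
      \<exists>(\<alpha>', \<beta>')\<in>M. \<alpha>' \<le> \<alpha> \<and> \<beta>' \<le> \<beta>"
    and "A_degree A \<alpha> = A_degree A \<beta>"
  shows "(monomial \<alpha> - monomial \<beta> :: ('n, 'k::comm_ring_1) mpoly)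
    \<in> ideal_gen ((\<lambda>(\<alpha>', \<beta>'). monomial \<alpha>' - monomial \<beta>') ` M)"
  using assms(4)
proof (induction "\<Sum>i\<in>UNIV. \<alpha> i + \<beta> i" arbitrary: \<alpha> \<beta> rule: less_induct)
  case less
  let ?J = "ideal_gen ((\<lambda>(\<alpha>', \<beta>'). monomial \<alpha>' - monomial \<beta>') ` M) :: ('n, 'k) mpoly set"
  show ?case
  proof (cases "\<alpha> = \<beta>")
    case True
    then show ?thesis by (simp add: ideal_gen_0)
  next
    case False
    then obtain \<alpha>' \<beta>' where M': "(\<alpha>', \<beta>') \<in> M" "\<alpha>' \<le> \<alpha>" "\<beta>' \<le> \<beta>"
      using cover less.prems by blast
    have deg': "A_degree A \<alpha>' = A_degree A \<beta>'" and "\<alpha>' \<noteq> \<beta>'" using M[OF M'(1)] by auto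
    then have "\<beta>' \<noteq> 0" using A_degree_eq_0_imp_0[OF \<open>pointed A\<close>] by force
    then obtain i0 where "\<beta>' i0 > 0" by (auto simp: fun_eq_iff)
    have \<alpha>: "\<alpha> = (\<alpha> - \<alpha>') + \<alpha>'" and \<beta>: "\<beta> = (\<beta> - \<beta>') + \<beta>'"
      using M'(2,3) by (auto simp: fun_eq_iff le_fun_def)
    have "A_degree A (\<alpha> - \<alpha>') = A_degree A (\<beta> - \<beta>')"
      using less.prems deg' \<alpha> \<beta> A_degree_add by (metis add_right_cancel)
    moreover have "(\<Sum>i\<in>UNIV. (\<alpha> - \<alpha>') i + (\<beta> - \<beta>') i) < (\<Sum>i\<in>UNIV. \<alpha> i + \<beta> i)"
      using M'(2,3) \<open>\<beta>' i0 > 0\<close>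
      by (intro sum_strict_mono_ex1) (auto simp: le_fun_def intro!: exI[of _ i0] dest: spec[of _ i0])
    ultimately have "monomial (\<alpha> - \<alpha>') - monomial (\<beta> - \<beta>') \<in> ?J"
      using less.hyps by blast
    moreover have "monomial \<alpha>' - monomial \<beta>' \<in> ?J"
      using M'(1) by (intro ideal_gen_base) force
    ultimately show ?thesis
      by (subst \<alpha>, subst \<beta>, unfold monomial_add_diff_eq) (intro ideal_gen_add ideal_gen_mult)
  qed
qed

lemma dickson_lemma_pairs:
  fixes P :: "(('n::finite \<Rightarrow> nat) \<times> ('n \<Rightarrow> nat)) set"
  obtains M where "M \<subseteq> P" "finite M" "\<And>\<alpha> \<beta>. (\<alpha>, \<beta>) \<in> P \<Longrightarrow> \<exists>(\<alpha>', \<beta>')\<in>M. \<alpha>' \<le> \<alpha> \<and> \<beta>' \<le> \<beta>"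
proof -
  obtain M where M: "M \<subseteq> P" "finite M"
    and cover: "\<forall>x\<in>P. \<exists>m\<in>M. \<forall>i\<in>UNIV. case_sum (fst m) (snd m) i \<le> case_sum (fst x) (snd x) i"
    using dickson_lemma[of "UNIV :: ('n + 'n) set" P "\<lambda>m. case_sum (fst m) (snd m)"] by auto
  have "\<exists>(\<alpha>', \<beta>')\<in>M. \<alpha>' \<le> \<alpha> \<and> \<beta>' \<le> \<beta>" if in_P: "(\<alpha>, \<beta>) \<in> P" for \<alpha> \<beta>
  proof -
    obtain m where "m \<in> M" "\<forall>i. case_sum (fst m) (snd m) i \<le> case_sum \<alpha> \<beta> i"
      using bspec[OF cover in_P] unfolding fst_conv snd_conv by blast
    then show ?thesis
      by (intro bexI[of _ m]) (auto simp: le_fun_def split: prod.splits dest: spec[of _ "Inl _"] spec[of _ "Inr _"])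
  qed
  with M show thesis using that by blast
qed

lemma toric_ideal_finitely_generated:
  fixes A :: "'n::finite \<Rightarrow> (nat \<Rightarrow>\<^sub>0 int)"
  assumes "pointed A"
  obtains K where "finite K" "K \<subseteq> kerZ A"
    "toric_ideal A \<subseteq> (ideal_gen (binomial ` K) :: ('n, 'k::comm_ring_1) mpoly set)"
proof -
  define P where "P = {(\<alpha>, \<beta>). A_degree A \<alpha> = A_degree A \<beta> \<and> \<alpha> \<noteq> \<beta>}"
  obtain M where M: "M \<subseteq> P" "finite M"
    and cover: "\<And>\<alpha> \<beta>. (\<alpha>, \<beta>) \<in> P \<Longrightarrow> \<exists>(\<alpha>', \<beta>')\<in>M. \<alpha>' \<le> \<alpha> \<and> \<beta>' \<le> \<beta>"
    by (rule dickson_lemma_pairs[of P]) blast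
  have M_cover: "\<exists>(\<alpha>', \<beta>')\<in>M. \<alpha>' \<le> \<alpha> \<and> \<beta>' \<le> \<beta>"
    if "A_degree A \<alpha> = A_degree A \<beta>" "\<alpha> \<noteq> \<beta>" for \<alpha> \<beta>
    using cover that unfolding P_def by blast
  define K where "K = (\<lambda>(\<alpha>, \<beta>) i. int (\<alpha> i) - int (\<beta> i)) ` M"
  define J where "J = (ideal_gen (binomial ` K) :: ('n, 'k) mpoly set)"
  have "(\<lambda>(\<alpha>, \<beta>). monomial \<alpha> - monomial \<beta>) ` M \<subseteq> J"
  proof clarify
    fix \<alpha> \<beta> assume "(\<alpha>, \<beta>) \<in> M"
    then have "binomial (\<lambda>i. int (\<alpha> i) - int (\<beta> i)) \<in> (binomial ` K :: ('n, 'k) mpoly set)"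
      unfolding K_def by force
    then show "monomial \<alpha> - monomial \<beta> \<in> J"
      unfolding J_def monomial_diff_eq_binomial_mult
      by (subst mult.commute) (intro ideal_gen_mult ideal_gen_base)
  qed
  then have "ideal_gen ((\<lambda>(\<alpha>, \<beta>). monomial \<alpha> - monomial \<beta>) ` M) \<subseteq> J"
    unfolding J_def by (intro ideal_gen_minimal) (auto simp: ideal_gen_eq_span)
  moreover have "binomial u \<in> ideal_gen ((\<lambda>(\<alpha>, \<beta>). monomial \<alpha> - monomial \<beta>) ` M)"
    if "u \<in> kerZ A" for u
  proof -
    have "(\<lambda>i. int (nat (u i)) - int (nat (- u i))) = u" by auto
    then have "A_degree A (\<lambda>i. nat (u i)) = A_degree A (\<lambda>i. nat (- u i))"
      using that by (simp add: A_degree_eq_iff)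
    moreover have "A_degree A \<alpha> = A_degree A \<beta> \<and> \<alpha> \<noteq> \<beta>" if "(\<alpha>, \<beta>) \<in> M" for \<alpha> \<beta>
      using that M(1) unfolding P_def by blast
    ultimately show ?thesis unfolding binomial_eq_monomial_diff
      using monomial_diff_in_ideal_gen_of_cover[OF assms _ M_cover] by blast
  qed
  ultimately have "toric_ideal A \<subseteq> J"
    unfolding toric_ideal_eq_ideal_gen[of A] J_def
    by (intro ideal_gen_minimal) (auto simp: ideal_gen_eq_span)
  moreover have "finite K" "K \<subseteq> kerZ A"
    using M unfolding K_def P_def by (auto simp: A_degree_eq_iff)
  ultimately show thesis using that J_def by blast
qed

section \<open>Rational spans and separating linear forms\<close>

lemma rat_common_denominator:
  fixes v :: "'a \<Rightarrow> rat"
  assumes "finite F"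
  obtains N :: int where "N > 0" "\<forall>x\<in>F. of_int N * v x \<in> \<int>"
proof -
  define q where "q x = snd (quotient_of (v x))" for x
  have q: "q x > 0" "of_int (q x) * v x \<in> \<int>" for x
  proof -
    obtain a b where ab: "quotient_of (v x) = (a, b)" by (metis surj_pair)
    have "b > 0" "v x = of_int a / of_int b"
      using quotient_of_denom_pos[OF ab] quotient_of_div[OF ab] by auto
    then have "of_int b * v x = of_int a" by simp
    then show "q x > 0" "of_int (q x) * v x \<in> \<int>" using \<open>b > 0\<close> by (simp_all add: q_def ab)
  qed
  have "of_int (\<Prod>y\<in>F. q y) * v x \<in> \<int>" if "x \<in> F" for x
  proof -
    have "of_int (\<Prod>y\<in>F. q y) * v x = of_int (\<Prod>y\<in>F - {x}. q y) * (of_int (q x) * v x)"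
      using assms that by (simp add: prod.remove mult_ac del: of_int_prod)
    then show ?thesis by (simp only:) (intro Ints_mult Ints_of_int q(2))
  qed
  moreover have "(\<Prod>y\<in>F. q y) > 0" using q(1) by (simp add: prod_pos)
  ultimately show thesis using that by blast
qed

lemma rat_vec_int_multiple:
  fixes v :: "'n::finite \<Rightarrow> rat"
  obtains N :: int and z where "N > 0" "\<And>i. of_int (z i) = of_int N * v i"
proof -
  obtain N :: int where N: "N > 0" "\<forall>i\<in>UNIV. of_int N * v i \<in> \<int>"
    using rat_common_denominator[OF finite_UNIV] by blast
  have "\<exists>k. of_int k = of_int N * v i" for i
  proof -
    have "of_int N * v i \<in> \<int>" using N(2) by blast
    then show ?thesis by (metis Ints_cases)
  qed
  then obtain z where "\<And>i. of_int (z i) = of_int N * v i" by metis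
  with N(1) show thesis by (rule that)
qed

definition qscale :: "rat \<Rightarrow> ('n \<Rightarrow> rat) \<Rightarrow> 'n \<Rightarrow> rat" where
  "qscale c v = (\<lambda>i. c * v i)"

interpretation qvec: vector_space qscale
  by unfold_locales (simp_all only: qscale_def plus_fun_def distrib_left distrib_right mult.assoc mult_1_left)

lemma sum_fun_apply: "(\<Sum>i\<in>F. f i) x = (\<Sum>i\<in>F. f i x)"
  by (induction F rule: infinite_finite_induct) auto

lemma sum_qscale_unit_vectors: "(\<Sum>i\<in>UNIV. qscale (v i) (\<lambda>j. of_bool (j = i))) = (v :: 'n::finite \<Rightarrow> rat)"
  by (rule ext) (simp add: sum_fun_apply qscale_def)

lemma qspan_eq_span: "qspan C = qvec.span ((\<lambda>u i. of_int (u i)) ` C)"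
proof -
  let ?q = "\<lambda>(u :: 'a \<Rightarrow> int) i. of_int (u i) :: rat"
  have "inj ?q" by (auto simp: inj_def fun_eq_iff)
  then have inv_q: "inv ?q (\<lambda>i. of_int (u i)) = u" for u
    using inv_f_f[of ?q u] by simp
  have "v \<in> qspan C \<longleftrightarrow> (\<exists>F c. finite F \<and> F \<subseteq> C \<and> v = (\<Sum>u\<in>F. qscale (c u) (?q u)))" for v
    unfolding qspan_def by (simp add: qscale_def fun_eq_iff sum_fun_apply)
  also have "\<dots> v \<longleftrightarrow> v \<in> qvec.span (?q ` C)" for v
    unfolding qvec.span_explicit
  proof safe
    fix F c assume "finite F" "F \<subseteq> C"
    then show "\<exists>t r. (\<Sum>u\<in>F. qscale (c u) (?q u)) = (\<Sum>a\<in>t. qscale (r a) a) \<and> finite t \<and> t \<subseteq> ?q ` C"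
      using \<open>inj ?q\<close> by (intro exI[of _ "?q ` F"] exI[of _ "c \<circ> inv ?q"])
        (auto simp: sum.reindex inj_on_subset inv_q)
  next
    fix t r assume "finite t" "t \<subseteq> ?q ` C"
    then obtain F where F: "F \<subseteq> C" "t = ?q ` F" by (meson subset_image_iff)
    then have "finite F" using \<open>finite t\<close> \<open>inj ?q\<close> by (metis finite_imageD inj_on_subset subset_UNIV)
    then show "\<exists>F c. finite F \<and> F \<subseteq> C \<and> (\<Sum>a\<in>t. qscale (r a) a) = (\<Sum>u\<in>F. qscale (c u) (?q u))"
      using F \<open>inj ?q\<close> by (intro exI[of _ F] exI[of _ "r \<circ> ?q"]) (auto simp: sum.reindex inj_on_subset)
  qed
  finally show ?thesis by blast
qed

lemma kerQ_of_int: "(\<lambda>i. of_int (u i) :: rat) \<in> kerQ A \<longleftrightarrow> u \<in> kerZ A"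
proof -
  have "(\<Sum>i\<in>UNIV. (of_int (u i) :: rat) * of_int (Poly_Mapping.lookup (A i) j))
      = of_int (\<Sum>i\<in>UNIV. u i * Poly_Mapping.lookup (A i) j)" for j
    by simp
  then show ?thesis unfolding kerQ_def kerZ_def by (simp del: of_int_sum of_int_mult)
qed

lemma subspace_kerQ: "qvec.subspace (kerQ A)"
  unfolding qvec.subspace_def kerQ_def
  by (simp add: qscale_def sum.distrib distrib_right mult.assoc flip: sum_distrib_left)

lemma qspan_subset_kerQ: "C \<subseteq> kerZ A \<Longrightarrow> qspan C \<subseteq> kerQ A"
  unfolding qspan_eq_span by (rule qvec.span_minimal) (auto simp: kerQ_of_int subspace_kerQ)

lemma qspan_psubset_kerQ:
  assumes "C \<subseteq> kerZ B" "kerZ B \<subset> kerZ A"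
  shows "qspan C \<subset> kerQ A"
proof -
  have "qspan C \<subseteq> kerQ A" using assms by (intro qspan_subset_kerQ) blast
  moreover have "qspan C \<noteq> kerQ A"
  proof
    assume "qspan C = kerQ A"
    then have "kerQ A \<subseteq> kerQ B" using assms(1) qspan_subset_kerQ by blast
    then have "kerZ A \<subseteq> kerZ B" using kerQ_of_int by blast
    then show False using assms(2) by blast
  qed
  ultimately show ?thesis by blast
qed

context \<comment> \<open>keeps the simp rule \<open>a * (b * x) = a * b * x\<close> of the next interpretation local\<close>
begin

interpretation rat_self: vector_space "(*) :: rat \<Rightarrow> rat \<Rightarrow> rat"
  by unfold_locales (simp_all only: distrib_left distrib_right mult.assoc mult_1_left)

interpretation qvec_rat: vector_space_pair "qscale :: rat \<Rightarrow> ('n \<Rightarrow> rat) \<Rightarrow> _" "(*) :: rat \<Rightarrow> rat \<Rightarrow> rat"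
  by unfold_locales

lemma linear_form_eq_sum:
  fixes h :: "('n::finite \<Rightarrow> rat) \<Rightarrow> rat"
  assumes "Vector_Spaces.linear qscale (*) h"
  shows "h v = (\<Sum>i\<in>UNIV. v i * h (\<lambda>j. of_bool (j = i)))"
proof -
  have "h v = h (\<Sum>i\<in>UNIV. qscale (v i) (\<lambda>j. of_bool (j = i)))"
    by (simp only: sum_qscale_unit_vectors)
  also have "\<dots> = (\<Sum>i\<in>UNIV. h (qscale (v i) (\<lambda>j. of_bool (j = i))))"
    by (rule qvec_rat.linear_sum[OF assms])
  also have "\<dots> = (\<Sum>i\<in>UNIV. v i * h (\<lambda>j. of_bool (j = i)))"
    by (simp only: qvec_rat.linear_scale[OF assms])
  finally show ?thesis .
qed

lemma form_separating_from_span: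
  fixes w :: "'n::finite \<Rightarrow> rat"
  assumes "w \<notin> qvec.span V"
  obtains d where "(\<Sum>i\<in>UNIV. w i * d i) \<noteq> 0" "\<forall>v\<in>V. (\<Sum>i\<in>UNIV. v i * d i) = 0"
proof -
  obtain B where B: "B \<subseteq> V" "qvec.independent B" "V \<subseteq> qvec.span B"
    using qvec.maximal_independent_subset by blast
  have "w \<notin> qvec.span B" using assms B(1) qvec.span_mono by blast
  then have "qvec.independent (insert w B)" using B(2) by (rule qvec.independent_insertI)
  then obtain h where h: "Vector_Spaces.linear qscale (*) h"
      "\<forall>x\<in>insert w B. h x = (if x = w then 1 else 0)"
    using qvec_rat.linear_independent_extend[of "insert w B" "\<lambda>x. if x = w then 1 else 0"] by blast
  have "h x = 0" if "x \<in> B" for x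
    using h(2) that qvec.span_base[OF that] \<open>w \<notin> qvec.span B\<close> by auto
  then have h_V: "h v = 0" if "v \<in> V" for v
  proof (rule qvec_rat.linear_eq_0_on_span[OF h(1)])
    show "v \<in> qvec.span B" using B(3) \<open>v \<in> V\<close> by blast
  qed
  define d where "d i = h (\<lambda>j. of_bool (j = i))" for i
  have hd: "h v = (\<Sum>i\<in>UNIV. v i * d i)" for v
    unfolding d_def by (rule linear_form_eq_sum[OF h(1)])
  show thesis
  proof (rule that)
    show "(\<Sum>i\<in>UNIV. w i * d i) \<noteq> 0" using h(2) hd[of w] by simp
    show "\<forall>v\<in>V. (\<Sum>i\<in>UNIV. v i * d i) = 0" using h_V hd by simp
  qed
qed

end

text \<open>Clear the denominators of a rational form separating some \<open>w \<in> ker\<^sub>\<rat>(A)\<close> from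
  \<open>span\<^sub>\<rat>(C)\<close>, and of \<open>w\<close> itself.\<close>
lemma int_form_separating:
  fixes A :: "'n::finite \<Rightarrow> (nat \<Rightarrow>\<^sub>0 int)"
  assumes "qspan C \<subset> kerQ A"
  obtains f w where "w \<in> kerZ A" "(\<Sum>i\<in>UNIV. w i * f i) \<noteq> 0" "\<forall>u\<in>C. (\<Sum>i\<in>UNIV. u i * f i) = 0"
proof -
  let ?q = "\<lambda>(u :: 'n \<Rightarrow> int) i. of_int (u i) :: rat"
  obtain w where w: "w \<in> kerQ A" "w \<notin> qvec.span (?q ` C)"
    using assms unfolding qspan_eq_span by blast
  obtain d where d: "(\<Sum>i\<in>UNIV. w i * d i) \<noteq> 0" "\<forall>v\<in>?q ` C. (\<Sum>i\<in>UNIV. v i * d i) = 0"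
    using form_separating_from_span[OF w(2)] by blast
  obtain N f where N: "N > 0" "\<And>i. of_int (f i) = of_int N * d i"
    using rat_vec_int_multiple[of d] by blast
  obtain M w' where M: "M > 0" "\<And>i. of_int (w' i) = of_int M * w i"
    using rat_vec_int_multiple[of w] by blast
  have "?q w' = qscale (of_int M) w" by (simp add: fun_eq_iff qscale_def M(2))
  then have "w' \<in> kerZ A"
    using qvec.subspace_scale[OF subspace_kerQ w(1)] kerQ_of_int by metis
  moreover have "(\<Sum>i\<in>UNIV. w' i * f i) \<noteq> 0"
  proof -
    have "(of_int (\<Sum>i\<in>UNIV. w' i * f i) :: rat) = (\<Sum>i\<in>UNIV. (of_int M * w i) * (of_int N * d i))"
      by (simp only: of_int_sum of_int_mult M(2) N(2))
    also have "\<dots> = of_int M * of_int N * (\<Sum>i\<in>UNIV. w i * d i)"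
      by (simp add: sum_distrib_left mult_ac)
    also have "\<dots> \<noteq> 0" using d(1) M(1) N(1) by simp
    finally show ?thesis by (metis of_int_0)
  qed
  moreover have "(\<Sum>i\<in>UNIV. u i * f i) = 0" if "u \<in> C" for u
  proof -
    have "(of_int (\<Sum>i\<in>UNIV. u i * f i) :: rat) = (\<Sum>i\<in>UNIV. of_int (u i) * (of_int N * d i))"
      by (simp only: of_int_sum of_int_mult N(2))
    also have "\<dots> = of_int N * (\<Sum>i\<in>UNIV. ?q u i * d i)"
      by (simp add: sum_distrib_left mult_ac)
    also have "\<dots> = 0" using d(2) that by simp
    finally show ?thesis by (metis of_int_eq_0_iff)
  qed
  ultimately show thesis using that by blast
qed

section \<open>Cutting down the kernel by one new row\<close>

definition add_row :: "('n \<Rightarrow> (nat \<Rightarrow>\<^sub>0 int)) \<Rightarrow> nat \<Rightarrow> ('n \<Rightarrow> int) \<Rightarrow> 'n \<Rightarrow> (nat \<Rightarrow>\<^sub>0 int)" where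
  "add_row A m f = (\<lambda>i. A i + Poly_Mapping.single m (f i))"

lemma kerZ_add_row:
  assumes "in_Zm m A"
  shows "kerZ (add_row A m f) = {u \<in> kerZ A. (\<Sum>i\<in>UNIV. u i * f i) = 0}"
proof -
  have A_m: "Poly_Mapping.lookup (A i) m = 0" for i
    using assms unfolding in_Zm_def by (meson in_keys_iff lessThan_iff less_irrefl subsetD)
  have row: "(\<Sum>i\<in>UNIV. u i * Poly_Mapping.lookup (add_row A m f i) j)
      = (\<Sum>i\<in>UNIV. u i * Poly_Mapping.lookup (A i) j) + (if j = m then \<Sum>i\<in>UNIV. u i * f i else 0)"
    for u j
    by (simp add: add_row_def lookup_add lookup_single when_def distrib_left sum.distrib)
  show ?thesis
  proof (intro set_eqI iffI)
    fix u assume "u \<in> kerZ (add_row A m f)"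
    then have row_0: "(\<Sum>i\<in>UNIV. u i * Poly_Mapping.lookup (A i) j)
        + (if j = m then \<Sum>i\<in>UNIV. u i * f i else 0) = 0" for j
      unfolding kerZ_def row by blast
    have "(\<Sum>i\<in>UNIV. u i * f i) = 0" using row_0[of m] by (simp add: A_m)
    moreover have "(\<Sum>i\<in>UNIV. u i * Poly_Mapping.lookup (A i) j) = 0" for j
      using row_0[of j] by (cases "j = m") (simp_all add: A_m)
    ultimately show "u \<in> {u \<in> kerZ A. (\<Sum>i\<in>UNIV. u i * f i) = 0}"
      unfolding kerZ_def by simp
  next
    fix u assume "u \<in> {u \<in> kerZ A. (\<Sum>i\<in>UNIV. u i * f i) = 0}"
    then show "u \<in> kerZ (add_row A m f)" unfolding kerZ_def row by simp
  qed
qed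

lemma in_Zm_add_row:
  assumes "in_Zm m A"
  shows "in_Zm (Suc m) (add_row A m f)"
proof -
  have "Poly_Mapping.keys (add_row A m f i) \<subseteq> Poly_Mapping.keys (A i) \<union> {m}" for i
    unfolding add_row_def using keys_add[of "A i" "Poly_Mapping.single m (f i)"] by (auto split: if_splits)
  then show ?thesis using assms unfolding in_Zm_def by (fastforce simp: less_Suc_eq)
qed

lemma pointed_mono: "kerZ B \<subseteq> kerZ A \<Longrightarrow> pointed A \<Longrightarrow> pointed B"
  unfolding pointed_def by blast

lemma add_row_separating:
  fixes A :: "'n::finite \<Rightarrow> (nat \<Rightarrow>\<^sub>0 int)"
  assumes "in_Zm m A" "pointed A" "C \<subseteq> kerZ A" "qspan C \<subset> kerQ A"
  obtains A' where "in_Zm (Suc m) A'" "pointed A'" "C \<subseteq> kerZ A'" "kerZ A' \<subset> kerZ A"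
proof -
  obtain f w where w: "w \<in> kerZ A" "(\<Sum>i\<in>UNIV. w i * f i) \<noteq> 0"
    and f: "\<forall>u\<in>C. (\<Sum>i\<in>UNIV. u i * f i) = 0"
    using int_form_separating[OF assms(4)] by blast
  have ker: "kerZ (add_row A m f) = {u \<in> kerZ A. (\<Sum>i\<in>UNIV. u i * f i) = 0}"
    using assms(1) by (rule kerZ_add_row)
  then have "kerZ (add_row A m f) \<subset> kerZ A" using w by blast
  moreover have "C \<subseteq> kerZ (add_row A m f)" using ker assms(3) f by blast
  ultimately show thesis
    using that in_Zm_add_row[OF assms(1)] pointed_mono[OF _ assms(2)] by blast
qed

section \<open>Radical splittings\<close>

lemma toric_ideal_eq_iff:
  "(toric_ideal A :: ('n::finite, 'k::comm_ring_1) mpoly set) = toric_ideal B \<longleftrightarrow> kerZ A = kerZ B"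
  using toric_ideal_subset_iff[of A B] toric_ideal_subset_iff[of B A] by blast

lemma radical_ideal_sum_toric_ideal:
  "radical (ideal_sum (toric_ideal A1) (toric_ideal A2))
     = radical (ideal_gen (binomial ` (kerZ A1 \<union> kerZ A2)) :: ('n::finite, 'k::comm_ring_1) mpoly set)"
  unfolding toric_ideal_eq_ideal_gen image_Un ideal_gen_Un ..

lemma kerZ_psubset_of_radical_ideal_gen:
  assumes "radical (ideal_gen (binomial ` X)) = (toric_ideal A :: ('n::finite, 'k::comm_ring_1) mpoly set)"
    and "kerZ A' \<subseteq> X" "toric_ideal A' \<noteq> (toric_ideal A :: ('n, 'k) mpoly set)"
  shows "kerZ A' \<subset> kerZ A"
proof -
  have "(toric_ideal A' :: ('n, 'k) mpoly set) \<subseteq> ideal_gen (binomial ` X)"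
    unfolding toric_ideal_eq_ideal_gen[of A'] using assms(2) by (intro ideal_gen_mono image_mono)
  then have "(toric_ideal A' :: ('n, 'k) mpoly set) \<subseteq> toric_ideal A"
    using assms(1) radical_subset by blast
  then have "kerZ A' \<subseteq> kerZ A" unfolding toric_ideal_subset_iff .
  moreover have "kerZ A' \<noteq> kerZ A" using assms(3) by (simp add: toric_ideal_eq_iff)
  ultimately show ?thesis by blast
qed

lemma toric_ideal_eq_radical_ideal_sum:
  assumes "radical (ideal_gen (binomial ` C)) = (toric_ideal A :: ('n::finite, 'k::idom) mpoly set)"
    and "C \<subseteq> kerZ A1 \<union> kerZ A2" "kerZ A1 \<subseteq> kerZ A" "kerZ A2 \<subseteq> kerZ A"
  shows "(toric_ideal A :: ('n, 'k) mpoly set) = radical (ideal_sum (toric_ideal A1) (toric_ideal A2))"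
proof -
  let ?J = "ideal_gen (binomial ` (kerZ A1 \<union> kerZ A2)) :: ('n, 'k) mpoly set"
  have "radical (ideal_gen (binomial ` C)) \<subseteq> radical ?J"
    using assms(2) by (intro radical_mono ideal_gen_mono image_mono)
  moreover have "?J \<subseteq> toric_ideal A"
    unfolding toric_ideal_eq_ideal_gen[of A] using assms(3,4) by (intro ideal_gen_mono image_mono) blast
  then have "radical ?J \<subseteq> toric_ideal A"
    using radical_mono[of ?J "toric_ideal A"] by (simp add: radical_toric_ideal)
  ultimately show ?thesis
    unfolding radical_ideal_sum_toric_ideal assms(1) by (rule subset_antisym)
qed

lemma split_min_gen_if_radical_splittable:
  fixes A :: "'n::finite \<Rightarrow> (nat \<Rightarrow>\<^sub>0 int)"
  assumes "pointed A" and "radical_splittable (toric_ideal A :: ('n, 'k::field) mpoly set)"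
  shows "\<exists>C C1 C2. C \<subseteq> kerZ A \<and>
    min_gen_up_to_radical ((binomial :: ('n \<Rightarrow> int) \<Rightarrow> ('n, 'k) mpoly) ` C) (toric_ideal A) \<and>
    C = C1 \<union> C2 \<and> qspan C1 \<subset> kerQ A \<and> qspan C2 \<subset> kerQ A"
proof -
  let ?I = "toric_ideal A :: ('n, 'k) mpoly set"
  let ?B = "binomial :: ('n \<Rightarrow> int) \<Rightarrow> ('n, 'k) mpoly"
  obtain A1 A2 :: "'n \<Rightarrow> (nat \<Rightarrow>\<^sub>0 int)"
    where splitting: "?I = radical (ideal_sum (toric_ideal A1) (toric_ideal A2))"
      and ne: "toric_ideal A1 \<noteq> ?I" "toric_ideal A2 \<noteq> ?I"
    using assms(2) unfolding radical_splittable_def by blast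
  have I: "radical (ideal_gen (?B ` (kerZ A1 \<union> kerZ A2))) = ?I"
    unfolding splitting radical_ideal_sum_toric_ideal ..
  have ker1: "kerZ A1 \<subset> kerZ A" and ker2: "kerZ A2 \<subset> kerZ A"
    using kerZ_psubset_of_radical_ideal_gen[OF I] ne by blast+
  obtain K where K: "finite K" "K \<subseteq> kerZ A" "?I \<subseteq> ideal_gen (?B ` K)"
    using toric_ideal_finitely_generated[OF assms(1)] by blast
  have "finite (?B ` K)" using K(1) by simp
  moreover have "?B ` K \<subseteq> ?I" using K(2) by (auto simp: binomial_in_toric_ideal_iff)
  moreover have "?I \<subseteq> radical (ideal_gen (?B ` K))" using K(3) radical_subset by blast
  ultimately obtain T where T: "T \<subseteq> ?B ` (kerZ A1 \<union> kerZ A2)" "min_gen_up_to_radical T ?I"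
    by (rule min_gen_up_to_radical_subset[OF I])
  obtain C where C: "C \<subseteq> kerZ A1 \<union> kerZ A2" "T = ?B ` C"
    using T(1) unfolding subset_image_iff by blast
  define C1 where "C1 = C \<inter> kerZ A1"
  define C2 where "C2 = C - kerZ A1"
  have "qspan C1 \<subset> kerQ A" using ker1 unfolding C1_def by (intro qspan_psubset_kerQ) auto
  moreover have "qspan C2 \<subset> kerQ A" using ker2 C(1) unfolding C2_def by (intro qspan_psubset_kerQ) auto
  moreover have "C \<subseteq> kerZ A" "C = C1 \<union> C2" using C(1) ker1 ker2 unfolding C1_def C2_def by auto
  ultimately show ?thesis using T(2) C(2) by blast
qed

lemma radical_splittable_if_split_min_gen:
  fixes A :: "'n::finite \<Rightarrow> (nat \<Rightarrow>\<^sub>0 int)"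
  assumes "in_Zm m A" "pointed A"
    and "\<exists>C C1 C2. C \<subseteq> kerZ A \<and>
      min_gen_up_to_radical ((binomial :: ('n \<Rightarrow> int) \<Rightarrow> ('n, 'k) mpoly) ` C) (toric_ideal A) \<and>
      C = C1 \<union> C2 \<and> qspan C1 \<subset> kerQ A \<and> qspan C2 \<subset> kerQ A"
  shows "radical_splittable (toric_ideal A :: ('n, 'k::field) mpoly set)"
proof -
  let ?I = "toric_ideal A :: ('n, 'k) mpoly set"
  let ?B = "binomial :: ('n \<Rightarrow> int) \<Rightarrow> ('n, 'k) mpoly"
  obtain C C1 C2 where C: "C \<subseteq> kerZ A" "min_gen_up_to_radical (?B ` C) ?I" "C = C1 \<union> C2"
    and C1: "qspan C1 \<subset> kerQ A" and C2: "qspan C2 \<subset> kerQ A"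
    using assms(3) by blast
  obtain A1 where A1: "in_Zm (Suc m) A1" "pointed A1" "C1 \<subseteq> kerZ A1" "kerZ A1 \<subset> kerZ A"
    using add_row_separating[OF assms(1,2) _ C1] C(1,3) by blast
  obtain A2 where A2: "in_Zm (Suc m) A2" "pointed A2" "C2 \<subseteq> kerZ A2" "kerZ A2 \<subset> kerZ A"
    using add_row_separating[OF assms(1,2) _ C2] C(1,3) by blast
  have "?I = radical (ideal_sum (toric_ideal A1) (toric_ideal A2))"
    using C(2,3) A1(3,4) A2(3,4) unfolding min_gen_up_to_radical_def
    by (intro toric_ideal_eq_radical_ideal_sum) auto
  moreover have "toric_ideal A1 \<noteq> ?I" "toric_ideal A2 \<noteq> ?I"
    using A1(4) A2(4) by (simp_all add: toric_ideal_eq_iff)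
  ultimately have "in_Zm (Suc m) A1 \<and> pointed A1 \<and> in_Zm (Suc m) A2 \<and> pointed A2 \<and>
      ?I = radical (ideal_sum (toric_ideal A1) (toric_ideal A2)) \<and> toric_ideal A1 \<noteq> ?I \<and> toric_ideal A2 \<noteq> ?I"
    using A1(1,2) A2(1,2) by (intro conjI)
  then show ?thesis unfolding radical_splittable_def by (intro exI)
qed

theorem corollary2p2:
  fixes A :: "'n::finite \<Rightarrow> (nat \<Rightarrow>\<^sub>0 int)" and m :: nat
  assumes "in_Zm m A" and "pointed A"
  shows "radical_splittable (toric_ideal A :: ('n, 'k::field) mpoly set) \<longleftrightarrow>
    (\<exists>C C1 C2. C \<subseteq> kerZ A \<and>
       min_gen_up_to_radical ((binomial :: ('n \<Rightarrow> int) \<Rightarrow> ('n, 'k) mpoly) ` C) (toric_ideal A) \<and>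
       C = C1 \<union> C2 \<and> qspan C1 \<subset> kerQ A \<and> qspan C2 \<subset> kerQ A)"
  using split_min_gen_if_radical_splittable[OF assms(2)] radical_splittable_if_split_min_gen[OF assms]
  by (rule iffI)

end
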